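(* Let $|x_1\rangle,\dots,|x_n\rangle\in\mathbb{C}^d$ be such that (i) they are linearly independent over $\mathbb{R}$, and (ii) $\langle x_j|x_k\rangle\in\mathbb{R}$ for all $j,k=1,\dots,n$. Then $n\le d$.
   Context: $\langle x|y\rangle=\sum_ix_i^*y_i$ denotes the standard Hermitian inner product on $\mathbb{C}^d$. *)

theory Defs
  imports "HOL-Analysis.Analysis"
begin

definition herm_inner :: "complex ^ 'd \<Rightarrow> complex ^ 'd \<Rightarrow> complex" where
  "herm_inner x y = (\<Sum>i\<in>UNIV. cnj (x $ i) * y $ i)"

end

theory Submission
  imports Defs
begin

text \<open>Write a complex relation \<open>\<Sum> a\<^sub>j x\<^sub>j = 0\<close> as \<open>u + i w = 0\<close> with \<open>u = \<Sum> Re a\<^sub>j x\<^sub>j\<close> and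
  \<open>w = \<Sum> Im a\<^sub>j x\<^sub>j\<close>. Since the Gram matrix is real, \<open>\<langle>x\<^sub>k|u\<rangle>\<close> and \<open>\<langle>x\<^sub>k|w\<rangle>\<close> are real, so
  both vanish; hence \<open>\<langle>u|u\<rangle> = \<langle>w|w\<rangle> = 0\<close>, i.e. \<open>u = w = 0\<close>, and real independence forces
  \<open>Re a\<^sub>j = Im a\<^sub>j = 0\<close>. So the vectors are linearly independent over \<open>\<complex>\<close>, and there are
  at most \<open>d\<close> of them.\<close>

lemma herm_inner_sum_right:
  "herm_inner y (\<Sum>j\<in>A. a j *s x j) = (\<Sum>j\<in>A. a j * herm_inner y (x j))"
  unfolding herm_inner_def
  by (simp add: sum_distrib_left sum.swap[of _ A] mult_ac)

lemma herm_inner_sum_scaleR_left: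
  "herm_inner (\<Sum>j\<in>A. (c j :: real) *\<^sub>R x j) y = (\<Sum>j\<in>A. of_real (c j) * herm_inner (x j) y)"
  unfolding herm_inner_def
  by (simp add: sum_distrib_left sum_distrib_right sum.swap[of _ A] mult_ac
      scaleR_vec_def scaleR_conv_of_real)

lemma herm_inner_add_right: "herm_inner y (u + v) = herm_inner y u + herm_inner y v"
  unfolding herm_inner_def by (simp add: distrib_left sum.distrib)

lemma herm_inner_smult_right: "herm_inner y (a *s v) = a * herm_inner y v"
  unfolding herm_inner_def by (simp add: sum_distrib_left mult_ac)

lemma herm_inner_self_eq_0_iff: "herm_inner v v = 0 \<longleftrightarrow> v = 0"
proof
  assume "herm_inner v v = 0"
  have "cnj (v $ i) * v $ i = of_real ((cmod (v $ i))\<^sup>2)" for i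
    by (metis complex_norm_square mult.commute of_real_power)
  then have "of_real (\<Sum>i\<in>UNIV. (cmod (v $ i))\<^sup>2) = (0 :: complex)"
    using \<open>herm_inner v v = 0\<close> by (simp add: herm_inner_def)
  then have "\<forall>i\<in>UNIV. (cmod (v $ i))\<^sup>2 = 0"
    by (subst (asm) of_real_eq_0_iff, subst (asm) sum_nonneg_eq_0_iff) auto
  then show "v = 0" by (simp add: vec_eq_iff)
qed (simp add: herm_inner_def)

lemma sum_scaleR_eq_0_if_herm_orthogonal:
  assumes "\<And>k. k \<in> A \<Longrightarrow> herm_inner (x k) (\<Sum>j\<in>A. c j *\<^sub>R x j) = 0"
  shows "(\<Sum>j\<in>A. (c j :: real) *\<^sub>R x j) = 0"
  using assms by (simp add: herm_inner_sum_scaleR_left flip: herm_inner_self_eq_0_iff)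

lemma herm_inner_sum_scaleR_right_real:
  assumes "\<And>j. j \<in> A \<Longrightarrow> herm_inner y (x j) \<in> \<real>"
  shows "herm_inner y (\<Sum>j\<in>A. (c j :: real) *\<^sub>R x j) \<in> \<real>"
proof -
  have "herm_inner y (\<Sum>j\<in>A. c j *\<^sub>R x j) = (\<Sum>j\<in>A. of_real (c j) * herm_inner y (x j))"
    using herm_inner_sum_right[of y "\<lambda>j. of_real (c j)" x A]
    by (simp add: scaleR_conv_of_real scaleR_vec_def vector_scalar_mult_def)
  then show ?thesis using assms by auto
qed

lemma complex_scalars_zero_if_real_independent_real_gram:
  fixes x :: "'i \<Rightarrow> complex ^ 'd"
  assumes indep: "\<And>c :: 'i \<Rightarrow> real. (\<Sum>j\<in>A. c j *\<^sub>R x j) = 0 \<Longrightarrow> \<forall>j\<in>A. c j = 0"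
    and real_gram: "\<And>j k. j \<in> A \<Longrightarrow> k \<in> A \<Longrightarrow> herm_inner (x j) (x k) \<in> \<real>"
    and rel: "(\<Sum>j\<in>A. a j *s x j) = 0"
  shows "\<forall>j\<in>A. a j = 0"
proof -
  define u where "u = (\<Sum>j\<in>A. Re (a j) *\<^sub>R x j)"
  define w where "w = (\<Sum>j\<in>A. Im (a j) *\<^sub>R x j)"
  have "(\<Sum>j\<in>A. a j *s x j) = u + \<i> *s w"
  proof -
    have "a j *s x j = Re (a j) *\<^sub>R x j + \<i> *s (Im (a j) *\<^sub>R x j)" for j
      unfolding scaleR_vec_def
      by (subst complex_eq[of "a j"]) (simp add: vec_eq_iff scaleR_conv_of_real algebra_simps)
    then show ?thesis unfolding u_def w_def by (simp add: sum.distrib vec.scale_sum_right)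
  qed
  with rel have decomp: "u + \<i> *s w = 0" by simp
  have "herm_inner (x k) u = 0 \<and> herm_inner (x k) w = 0" if "k \<in> A" for k
  proof -
    have "herm_inner (x k) u \<in> \<real>" "herm_inner (x k) w \<in> \<real>"
      unfolding u_def w_def using that real_gram by (auto intro!: herm_inner_sum_scaleR_right_real)
    then obtain r s where "herm_inner (x k) u = of_real r" "herm_inner (x k) w = of_real s"
      by (metis Reals_cases)
    moreover have "herm_inner (x k) u + \<i> * herm_inner (x k) w = 0"
      using arg_cong[OF decomp, of "herm_inner (x k)"]
      by (simp only: herm_inner_add_right herm_inner_smult_right) (simp add: herm_inner_def)
    ultimately show ?thesis by (simp add: complex_eq_iff)
  qed
  then have "u = 0" "w = 0"
    unfolding u_def w_def by (auto intro: sum_scaleR_eq_0_if_herm_orthogonal)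
  then have "\<forall>j\<in>A. Re (a j) = 0" "\<forall>j\<in>A. Im (a j) = 0"
    using indep[of "\<lambda>j. Re (a j)"] indep[of "\<lambda>j. Im (a j)"] unfolding u_def w_def by blast+
  then show ?thesis by (simp add: complex_eq_iff)
qed

lemma inj_on_if_scalars_zero:
  fixes x :: "'i \<Rightarrow> 'v :: real_vector"
  assumes "finite A" and indep: "\<And>c :: 'i \<Rightarrow> real. (\<Sum>j\<in>A. c j *\<^sub>R x j) = 0 \<Longrightarrow> \<forall>j\<in>A. c j = 0"
  shows "inj_on x A"
proof (rule inj_onI, rule ccontr)
  fix i j assume ij: "i \<in> A" "j \<in> A" "x i = x j" "i \<noteq> j"
  define c :: "'i \<Rightarrow> real" where "c k = (if k = i then 1 else if k = j then -1 else 0)" for k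
  have "(\<Sum>k\<in>A. c k *\<^sub>R x k) = (\<Sum>k\<in>{i, j}. c k *\<^sub>R x k)"
    by (rule sum.mono_neutral_right) (use ij \<open>finite A\<close> in \<open>auto simp: c_def\<close>)
  also have "\<dots> = 0" using ij by (simp add: c_def)
  finally show False using indep[of c] ij by (auto simp: c_def)
qed

lemma card_le_CARD_if_complex_scalars_zero:
  fixes x :: "'i \<Rightarrow> complex ^ 'd"
  assumes "finite A" "inj_on x A"
    and indep: "\<And>a. (\<Sum>j\<in>A. a j *s x j) = 0 \<Longrightarrow> \<forall>j\<in>A. a j = 0"
  shows "card A \<le> CARD('d)"
proof -
  have "vec.independent (x ` A)"
  proof (rule vec.independent_if_scalars_zero)
    show "finite (x ` A)" using \<open>finite A\<close> by simp
    fix f v assume "(\<Sum>v\<in>x ` A. f v *s v) = 0" and "v \<in> x ` A"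
    then show "f v = 0"
      using indep[of "f \<circ> x"] by (auto simp: sum.reindex[OF \<open>inj_on x A\<close>])
  qed
  then have "card (x ` A) \<le> vec.dim (x ` A)"
    by (rule vec.independent_bound_general[THEN conjunct2])
  also have "\<dots> \<le> CARD('d)" by (rule dim_subset_UNIV_cart_gen)
  finally show ?thesis using card_image[OF \<open>inj_on x A\<close>] by simp
qed

theorem lemma4p2:
  fixes x :: "nat \<Rightarrow> complex ^ 'd" and n :: nat
  assumes indep: "\<And>c :: nat \<Rightarrow> real. (\<Sum>j<n. c j *\<^sub>R x j) = 0 \<Longrightarrow> (\<forall>j<n. c j = 0)"
    and real_inner: "\<And>j k. j < n \<Longrightarrow> k < n \<Longrightarrow> herm_inner (x j) (x k) \<in> \<real>"
  shows "n \<le> CARD('d)"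
proof -
  have indep': "\<forall>j\<in>{..<n}. c j = 0" if "(\<Sum>j<n. c j *\<^sub>R x j) = 0" for c
    using indep[OF that] by simp
  have "card {..<n} \<le> CARD('d)"
  proof (rule card_le_CARD_if_complex_scalars_zero)
    show "inj_on x {..<n}" by (rule inj_on_if_scalars_zero[OF _ indep']) simp
    show "\<forall>j\<in>{..<n}. a j = 0" if "(\<Sum>j<n. a j *s x j) = 0" for a
      by (rule complex_scalars_zero_if_real_independent_real_gram[OF indep' _ that])
        (use real_inner in auto)
  qed simp
  then show ?thesis by simp
qed

end
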